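(* The group $\mathrm{Aut}(\mathcal{M}(2;\mathbb{C});\Phi_{\mathrm{Id}})$ of holomorphic automorphisms of $\mathcal{M}(2;\mathbb{C})$ commuting with $\Phi_{\mathrm{Id}}\colon \mathrm{M}\mapsto \mathrm{M}^2$ is generated by the transposition $\mathcal{T}\colon \mathrm{M}\mapsto {}^t\mathrm{M}$ and the maps $\sigma_{\mathrm{P}}\colon \mathrm{M}\mapsto \mathrm{P}\mathrm{M}\mathrm{P}^{-1}$, $\mathrm{P}\in\mathrm{GL}(2;\mathbb{C})$. More precisely, $\mathrm{Aut}(\mathcal{M}(2;\mathbb{C});\Phi_{\mathrm{Id}})\simeq \mathrm{PGL}(2;\mathbb{C})\rtimes\mathbb{Z}/2\mathbb{Z}$.
   Context: $\mathcal{M}(2;\mathbb{C})\simeq\mathbb{C}^4$ is the space of complex $2\times 2$ matrices. For a map $f\colon X\to X$, $\mathrm{Aut}(X;f)$ denotes the group of holomorphic automorphisms $g$ of $X$ with $g\circ f=f\circ g$. *)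

theory Defs
  imports "HOL-Analysis.Analysis"
begin

type_synonym mat2 = "complex^2^2"

definition cscale :: "complex \<Rightarrow> mat2 \<Rightarrow> mat2" where
  "cscale c A = (\<chi> i j. c * A $ i $ j)"

definition complex_linear :: "(mat2 \<Rightarrow> mat2) \<Rightarrow> bool" where
  "complex_linear L \<longleftrightarrow> linear L \<and> (\<forall>c A. L (cscale c A) = cscale c (L A))"

definition holo_mat :: "(mat2 \<Rightarrow> mat2) \<Rightarrow> bool" where
  "holo_mat f \<longleftrightarrow> (\<forall>x. \<exists>L. complex_linear L \<and> (f has_derivative L) (at x))"

definition holo_aut :: "(mat2 \<Rightarrow> mat2) \<Rightarrow> bool" where
  "holo_aut g \<longleftrightarrow> bij g \<and> holo_mat g \<and> holo_mat (inv g)"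

definition Phi_Id :: "mat2 \<Rightarrow> mat2" where
  "Phi_Id M = M ** M"

definition Aut_Phi :: "(mat2 \<Rightarrow> mat2) set" where
  "Aut_Phi = {g. holo_aut g \<and> g \<circ> Phi_Id = Phi_Id \<circ> g}"

definition transp_map :: "mat2 \<Rightarrow> mat2" where
  "transp_map M = transpose M"

definition sigma :: "mat2 \<Rightarrow> mat2 \<Rightarrow> mat2" where
  "sigma P M = P ** M ** matrix_inv P"

end

theory Submission
  imports Defs "HOL-Complex_Analysis.Complex_Analysis"
begin

text \<open>Conjugations \<open>M \<mapsto> P M P\<^sup>-\<^sup>1\<close> and their composites with transposition are
  linear automorphisms commuting with squaring. Conversely, let \<open>g\<close> commute with squaring and
  let \<open>L\<close> be its derivative at \<open>0\<close>. Expanding \<open>t \<mapsto> g (t M)\<close> in a power series, the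
  identity \<open>g (t\<^sup>2 M\<^sup>2) = g (t M)\<^sup>2\<close> yields recursions for the coefficients: they give
  \<open>g 0 = 0\<close> and \<open>L (M\<^sup>2) = (L M)\<^sup>2\<close>, and when the eigenvalues of \<open>L M\<close> have distinct
  moduli, all coefficients of order \<open>\<ge> 2\<close> vanish, because no nonzero matrix anticommutes with
  such a matrix and the property survives squaring. So \<open>g = L\<close> on the open set of those
  \<open>M\<close>; it meets the complex line through any point and a point of the set in a nonempty
  open subset, so \<open>g = L\<close> everywhere by analytic continuation along lines. Finally, a
  bijective linear map of \<open>\<M>(2;\<complex>)\<close> preserving squares maps the matrix units
  \<open>E\<^sub>1\<^sub>1, E\<^sub>1\<^sub>2, E\<^sub>2\<^sub>1\<close> to a system of the same relations, which is conjugate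
  either to the matrix units or to their transposes.\<close>

unbundle no Formal_Power_Series.fps_syntax \<comment> \<open>frees \<open>$\<close> for matrix entries\<close>

lemmas mat2_simps =
  matrix_matrix_mult_def sum_2 vec_eq_iff forall_2 mat_def transpose_def cscale_def

lemma invertible_matrix_inv:
  assumes "invertible A"
  shows "A ** matrix_inv A = mat 1 \<and> matrix_inv A ** A = mat 1"
proof -
  obtain B where "A ** B = mat 1 \<and> B ** A = mat 1"
    using assms unfolding invertible_def by blast
  then show ?thesis
    unfolding matrix_inv_def by (rule someI)
qed

lemmas matrix_inv_right = invertible_matrix_inv[THEN conjunct1]
  and matrix_inv_left = invertible_matrix_inv[THEN conjunct2]

lemma cscale_matrix_mult:
  "cscale c A ** B = cscale c (A ** B)" "A ** cscale c B = cscale c (A ** B)"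
  by (simp_all add: mat2_simps algebra_simps)

lemma cscale_diff_right: "cscale c (A - B) = cscale c A - cscale c B"
  by (simp add: mat2_simps algebra_simps)

lemma cscale_eq_0_iff: "cscale c A = 0 \<longleftrightarrow> c = 0 \<or> A = 0"
  by (auto simp: mat2_simps)

lemma cscale_0_left [simp]: "cscale 0 A = 0" and cscale_1_left [simp]: "cscale 1 A = A"
  by (simp_all add: cscale_def vec_eq_iff)

lemma matrix_mult_diff_distrib:
  "(A - B) ** C = A ** C - B ** (C::mat2)" "C ** (A - B) = C ** A - C ** (B::mat2)"
  by (simp_all add: mat2_simps algebra_simps)

lemma matrix_add_rdistrib: "(A + B) ** C = A ** C + B ** (C::mat2)"
  by (simp add: mat2_simps algebra_simps)

lemma mat2_double_eq_0: "(X::mat2) + X = 0 \<Longrightarrow> X = 0"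
  by (simp add: vec_eq_iff forall_2)

lemma scaleR_eq_cscale: "r *\<^sub>R A = cscale (complex_of_real r) A"
proof -
  have "(r *\<^sub>R A) $ i $ j = complex_of_real r * A $ i $ j" for i j
    by (simp only: vector_scaleR_component) (simp add: scaleR_conv_of_real)
  then show ?thesis
    by (simp add: vec_eq_iff cscale_def)
qed

lemma complex_linearI:
  assumes "\<And>A B. L (A + B) = L A + L B" "\<And>c A. L (cscale c A) = cscale c (L A)"
  shows "complex_linear L"
  unfolding complex_linear_def using assms by (auto intro: linearI simp: scaleR_eq_cscale)

lemma complex_linear_add: "complex_linear L \<Longrightarrow> L (A + B) = L A + L B"
  and complex_linear_diff: "complex_linear L \<Longrightarrow> L (A - B) = L A - L B"
  and complex_linear_cscale: "complex_linear L \<Longrightarrow> L (cscale c A) = cscale c (L A)"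
  and complex_linear_0: "complex_linear L \<Longrightarrow> L 0 = 0"
  unfolding complex_linear_def by (simp_all add: linear_add linear_diff linear_0)

lemma complex_linear_id: "complex_linear id"
  by (simp add: complex_linear_def linear_id)

lemma complex_linear_compose:
  "complex_linear L \<Longrightarrow> complex_linear K \<Longrightarrow> complex_linear (L \<circ> K)"
  unfolding complex_linear_def by (auto intro: linear_compose)

lemma complex_linear_sandwich: "complex_linear (\<lambda>M. A ** M ** B)"
  by (rule complex_linearI) (simp_all add: mat2_simps algebra_simps)

lemma complex_linear_sigma: "complex_linear (sigma P)"
  using complex_linear_sandwich by (simp add: sigma_def[abs_def])

lemma complex_linear_transp_map: "complex_linear transp_map"
  by (rule complex_linearI) (simp_all add: mat2_simps transp_map_def algebra_simps)

lemma complex_linear_imp_holo_mat: "complex_linear L \<Longrightarrow> holo_mat L"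
  unfolding holo_mat_def complex_linear_def
  by (meson bounded_linear_imp_has_derivative linear_conv_bounded_linear)

definition munit :: "2 \<Rightarrow> 2 \<Rightarrow> mat2" where
  "munit i j = (\<chi> k l. if k = i \<and> l = j then 1 else 0)"

lemma complex_linear_eqI:
  assumes "complex_linear L" "complex_linear K" "\<And>i j. L (munit i j) = K (munit i j)"
  shows "L = K"
proof
  fix A :: mat2
  have decomp: "A = cscale (A$1$1) (munit 1 1) + cscale (A$1$2) (munit 1 2)
         + cscale (A$2$1) (munit 2 1) + cscale (A$2$2) (munit 2 2)"
    by (simp add: mat2_simps munit_def)
  show "L A = K A"
    by (subst (1 2) decomp) (simp add: complex_linear_add[OF assms(1)] complex_linear_add[OF assms(2)]
        complex_linear_cscale[OF assms(1)] complex_linear_cscale[OF assms(2)] assms(3))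
qed

lemma Aut_PhiI:
  assumes "complex_linear L" "complex_linear K" "L \<circ> K = id" "K \<circ> L = id"
    and "\<And>M. L (M ** M) = L M ** L M"
  shows "L \<in> Aut_Phi"
proof -
  have "bij L" "inv L = K"
    using assms(3,4) o_bij inv_unique_comp by blast+
  moreover have "holo_mat L" "holo_mat (inv L)"
    using assms(1,2) \<open>inv L = K\<close> complex_linear_imp_holo_mat by simp_all
  ultimately show ?thesis
    using assms(5)
    unfolding Aut_Phi_def holo_aut_def Phi_Id_def by (auto simp: fun_eq_iff)
qed

lemma sigma_eqI:
  assumes "invertible P" "P ** A = B ** P"
  shows "sigma P A = B"
proof -
  have "sigma P A = B ** (P ** matrix_inv P)"
    using assms(2) by (simp add: sigma_def matrix_mul_assoc)
  then show ?thesis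
    using assms(1) by (simp add: matrix_inv_right)
qed

lemma sigma_matrix_mult:
  assumes "invertible P"
  shows "sigma P (A ** B) = sigma P A ** sigma P B"
proof -
  have "sigma P A ** sigma P B = P ** A ** (matrix_inv P ** P) ** B ** matrix_inv P"
    by (simp add: sigma_def matrix_mul_assoc)
  then show ?thesis
    using assms by (simp add: sigma_def matrix_inv_left matrix_mul_assoc)
qed

lemma sigma_inverse:
  assumes "invertible P"
  shows "sigma P \<circ> (\<lambda>M. matrix_inv P ** M ** P) = id"
    and "(\<lambda>M. matrix_inv P ** M ** P) \<circ> sigma P = id"
  using assms unfolding sigma_def
  by (simp_all add: fun_eq_iff matrix_mul_assoc matrix_inv_right)
    (simp_all add: matrix_inv_left matrix_inv_right flip: matrix_mul_assoc)

lemma sigma_in_Aut_Phi: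
  assumes "invertible P"
  shows "sigma P \<in> Aut_Phi"
  using Aut_PhiI[OF complex_linear_sigma complex_linear_sandwich sigma_inverse[OF assms]]
    sigma_matrix_mult[OF assms] by blast

lemma sigma_transp_in_Aut_Phi:
  assumes "invertible P"
  shows "sigma P \<circ> transp_map \<in> Aut_Phi"
proof (rule Aut_PhiI)
  show "complex_linear (sigma P \<circ> transp_map)"
    "complex_linear (transp_map \<circ> (\<lambda>M. matrix_inv P ** M ** P))"
    by (intro complex_linear_compose complex_linear_sigma complex_linear_transp_map
        complex_linear_sandwich)+
  have "transp_map \<circ> transp_map = id"
    by (simp add: fun_eq_iff transp_map_def)
  then show "sigma P \<circ> transp_map \<circ> (transp_map \<circ> (\<lambda>M. matrix_inv P ** M ** P)) = id"
    "transp_map \<circ> (\<lambda>M. matrix_inv P ** M ** P) \<circ> (sigma P \<circ> transp_map) = id"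
    using sigma_inverse[OF assms] by (simp_all add: comp_assoc) (simp_all flip: comp_assoc)
  show "(sigma P \<circ> transp_map) (M ** M) = (sigma P \<circ> transp_map) M ** (sigma P \<circ> transp_map) M" for M
    by (simp add: transp_map_def matrix_transpose_mul sigma_matrix_mult[OF assms])
qed

lemma sigma_eq_id_iff:
  assumes "invertible P"
  shows "sigma P = id \<longleftrightarrow> (\<exists>c. c \<noteq> 0 \<and> P = cscale c (mat 1))"
proof
  assume "sigma P = id"
  then have "P ** M ** matrix_inv P ** P = M ** P" for M
    by (metis id_apply sigma_def)
  then have "P ** M = M ** P" for M
    using matrix_inv_left[OF assms] by (simp flip: matrix_mul_assoc)
  from this[of "munit 1 2"] this[of "munit 2 1"] have P: "P = cscale (P$1$1) (mat 1)"
    by (auto simp: mat2_simps munit_def)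
  moreover have "P \<noteq> 0"
    using matrix_inv_right[OF assms] by (auto simp: mat2_simps)
  ultimately show "\<exists>c. c \<noteq> 0 \<and> P = cscale c (mat 1)"
    by (metis cscale_0_left)
next
  assume "\<exists>c. c \<noteq> 0 \<and> P = cscale c (mat 1)"
  then have "P ** M = M ** P" for M
    by (auto simp: mat2_simps algebra_simps)
  then show "sigma P = id"
    using assms by (auto simp: fun_eq_iff intro: sigma_eqI)
qed

lemma transp_map_neq_sigma:
  assumes "invertible P"
  shows "transp_map \<noteq> sigma P"
proof
  assume "transp_map = sigma P"
  then have "transpose X = sigma P X" for X
    by (simp add: transp_map_def)
  then have "transpose (M ** N) = transpose M ** transpose N" for M N :: mat2
    using sigma_matrix_mult[OF assms] by presburger
  then have "transpose N ** transpose M = transpose M ** transpose N" for M N :: mat2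
    by (simp add: matrix_transpose_mul)
  from this[of "munit 1 2" "munit 2 1"] show False
    by (simp add: mat2_simps munit_def)
qed

subsection \<open>Bijective linear maps preserving squares\<close>

lemma collinear_if_det_eq_0:
  fixes u w :: "complex^2"
  assumes "u \<noteq> 0" "u$1 * w$2 = u$2 * w$1"
  shows "\<exists>c. w = c *s u"
proof (cases "u$1 = 0")
  case True
  with assms have "u$2 \<noteq> 0" "w$1 = 0"
    by (auto simp: vec_eq_iff forall_2)
  with True have "w = (w$2 / u$2) *s u"
    by (simp add: vec_eq_iff forall_2)
  then show ?thesis ..
next
  case False
  with assms(2) have "w = (w$1 / u$1) *s u"
    by (simp add: vec_eq_iff forall_2 field_simps)
  then show ?thesis ..
qed

lemma mat2_kernel_collinear:
  fixes e :: mat2 and u w :: "complex^2"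
  assumes "e *v u = 0" "e *v w = 0" "u \<noteq> 0" "e \<noteq> 0"
  shows "\<exists>c. w = c *s u"
proof -
  define U :: mat2 where "U = (\<chi> i j. if j = 1 then u$i else w$i)"
  have "e ** U = 0"
    using assms(1,2) by (simp add: U_def vec_eq_iff forall_2 matrix_matrix_mult_def
        matrix_vector_mult_def sum_2)
  then have "\<not> invertible U"
    using assms(4) matrix_inv_right by (metis matrix_mul_assoc matrix_mul_rid times0_left)
  then have "u$1 * w$2 = u$2 * w$1"
    by (simp add: invertible_det_nz det_2 U_def)
  then show ?thesis
    using assms(3) collinear_if_det_eq_0 by blast
qed

lemma idempotent_fixed_vector:
  fixes e :: mat2
  assumes "e ** e = e" "e \<noteq> 0"
  obtains p where "p \<noteq> 0" "e *v p = p"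
proof -
  obtain n where "e *v n \<noteq> 0"
    using assms(2) matrix_eq[of e 0] by auto
  moreover have "e *v (e *v n) = e *v n"
    by (simp add: matrix_vector_mul_assoc assms(1))
  ultimately show ?thesis using that by blast
qed

lemma idempotent_anticommutant_sandwich:
  fixes e z :: mat2
  assumes "e ** e = e" "e ** z + z ** e = z"
  shows "e ** z ** e = 0"
proof -
  have "e ** (e ** z + z ** e) = e ** z"
    using assms(2) by simp
  then have "e ** z + e ** z ** e = e ** z"
    using assms(1) by (simp add: matrix_add_ldistrib matrix_mul_assoc)
  then show ?thesis by simp
qed

lemma matrix_units_conjugator:
  fixes e x y :: mat2 and p :: "complex^2"
  assumes "e ** e = e" "y ** y = 0" "e ** y + y ** e = y" "x ** y + y ** x = mat 1"
    and "p \<noteq> 0" "e *v p = p" "x *v p = 0"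
  shows "\<exists>P. invertible P \<and> P ** munit 1 1 = e ** P \<and> P ** munit 1 2 = x ** P
    \<and> P ** munit 2 1 = y ** P"
proof -
  define q where "q = y *v p"
  define P :: mat2 where "P = (\<chi> i j. if j = 1 then p$i else q$i)"
  have "e *v q = (e ** y ** e) *v p"
    unfolding q_def by (metis matrix_vector_mul_assoc assms(6))
  then have eq: "e *v q = 0"
    using idempotent_anticommutant_sandwich[OF assms(1,3)] by simp
  have "x ** y = mat 1 - y ** x"
    using assms(4) by (simp add: eq_diff_eq)
  then have "x *v q = p - y *v (x *v p)"
    by (simp add: q_def matrix_vector_mul_assoc matrix_vector_mult_diff_rdistrib)
  then have xq: "x *v q = p"
    using assms(7) by simp
  have yq: "y *v q = 0"
    unfolding q_def by (simp add: matrix_vector_mul_assoc assms(2))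
  have "det P \<noteq> 0"
  proof
    assume "det P = 0"
    then obtain c where "q = c *s p"
      using collinear_if_det_eq_0[OF assms(5)] by (auto simp: det_2 P_def algebra_simps)
    then have "p = 0"
      using xq assms(7) by (simp add: vector_scalar_commute)
    then show False using assms(5) by simp
  qed
  moreover have "(A ** P)$i$1 = (A *v p)$i" "(A ** P)$i$2 = (A *v q)$i" for A :: mat2 and i
    by (simp_all add: matrix_matrix_mult_def matrix_vector_mult_def sum_2 P_def)
  ultimately show ?thesis
    using assms(6,7) eq xq yq
    by (auto simp: invertible_det_nz vec_eq_iff forall_2 matrix_matrix_mult_def sum_2 munit_def
        P_def q_def)
qed

lemma matrix_units_fixed_vector_disj:
  fixes e x y :: mat2 and p :: "complex^2"
  assumes "e ** e = e" "x ** x = 0" "y ** y = 0" "e ** x + x ** e = x" "e ** y + y ** e = y"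
    and "x ** y + y ** x = mat 1" "e \<noteq> 0" "p \<noteq> 0" "e *v p = p"
  shows "x *v p = 0 \<or> y *v p = 0"
proof (rule ccontr)
  assume "\<not> ?thesis"
  then have xp: "x *v p \<noteq> 0" and yp: "y *v p \<noteq> 0" by auto
  \<comment> \<open>Both \<open>x p\<close> and \<open>y p\<close> lie in the kernel of \<open>e\<close>, hence \<open>y p = c x p\<close>;
    then \<open>y - c x\<close> kills \<open>p\<close>, although its square is the scalar matrix \<open>-c\<close>.\<close>
  have "e *v (z *v p) = 0" if "e ** z + z ** e = z" for z
    by (metis assms(1,9) idempotent_anticommutant_sandwich that matrix_vector_mul_assoc
        matrix_vector_mult_0)
  then obtain c where c: "y *v p = c *s (x *v p)"
    using mat2_kernel_collinear[OF _ _ xp assms(7)] assms(4,5) by blast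
  define z where "z = y - cscale c x"
  have "z ** z = y ** y - cscale c (x ** y + y ** x) + cscale (c * c) (x ** x)"
    unfolding z_def by (simp add: mat2_simps algebra_simps)
  then have zz: "z ** z = cscale (- c) (mat 1)"
    using assms(2,3,6) by (simp add: mat2_simps)
  have "z *v p = 0"
    using c by (simp add: z_def vec_eq_iff forall_2 matrix_vector_mult_def sum_2 cscale_def
        algebra_simps)
  then have "(z ** z) *v p = 0"
    by (simp flip: matrix_vector_mul_assoc)
  moreover have "cscale (- c) (mat 1) *v p = (- c) *s p"
    by (simp add: vec_eq_iff forall_2 matrix_vector_mult_def sum_2 cscale_def mat_def)
  ultimately have "c = 0"
    using zz assms(8) by simp
  then show False
    using c yp by simp
qed

lemma munit_relations:
  "munit 1 1 ** munit 1 1 = munit 1 1" "munit 1 2 ** munit 1 2 = 0" "munit 2 1 ** munit 2 1 = 0"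
  "munit 1 1 ** munit 1 2 + munit 1 2 ** munit 1 1 = munit 1 2"
  "munit 1 1 ** munit 2 1 + munit 2 1 ** munit 1 1 = munit 2 1"
  "munit 1 2 ** munit 2 1 + munit 2 1 ** munit 1 2 = mat 1" "munit 2 2 = mat 1 - munit 1 1"
  by (simp_all add: mat2_simps munit_def)

lemma transp_map_munit: "transp_map (munit i j) = munit j i"
  by (simp add: transp_map_def munit_def transpose_def vec_eq_iff)

locale mat2_jordan_hom =
  fixes L :: "mat2 \<Rightarrow> mat2"
  assumes complex_linear: "complex_linear L"
    and square: "L (M ** M) = L M ** L M"
begin

lemma anticommutator: "L (A ** B + B ** A) = L A ** L B + L B ** L A"
proof -
  have "L ((A + B) ** (A + B)) = L (A + B) ** L (A + B)"
    by (rule square)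
  then show ?thesis
    by (simp add: matrix_add_ldistrib matrix_add_rdistrib complex_linear_add[OF complex_linear]
        square algebra_simps)
qed

lemma mat_1:
  assumes "surj L"
  shows "L (mat 1) = mat 1"
proof -
  obtain A where "mat 1 = L A"
    using surjD[OF assms] by blast
  then have A: "L A = mat 1" by (rule sym)
  have "mat 1 + mat 1 = L (mat 1) + (L (mat 1) :: mat2)"
    using anticommutator[of A "mat 1"]
    by (simp only: matrix_mul_rid matrix_mul_lid A complex_linear_add[OF complex_linear])
  then have "(mat 1 - L (mat 1)) + (mat 1 - L (mat 1)) = 0"
    by (simp add: algebra_simps)
  from mat2_double_eq_0[OF this] show ?thesis
    by simp
qed

lemma image_munit_2_2:
  assumes "surj L"
  shows "L (munit 2 2) = mat 1 - L (munit 1 1)"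
  using mat_1[OF assms] munit_relations(7) by (simp add: complex_linear_diff[OF complex_linear])

lemma eq_sigma_comp_if_munit:
  assumes "surj L" "invertible P" "complex_linear T"
    and "P ** munit 1 1 = L (munit 1 1) ** P"
    and "T (munit 1 1) = munit 1 1" "T (munit 2 2) = munit 2 2"
    and "sigma P (T (munit 1 2)) = L (munit 1 2)" "sigma P (T (munit 2 1)) = L (munit 2 1)"
  shows "L = sigma P \<circ> T"
proof (rule complex_linear_eqI[OF complex_linear complex_linear_compose[OF complex_linear_sigma]])
  have "P ** munit 2 2 = (mat 1 - L (munit 1 1)) ** P"
    using assms(4) munit_relations(7) by (simp add: matrix_mult_diff_distrib)
  then have "sigma P (munit i i) = L (munit i i)" for i
    using assms(2,4) image_munit_2_2[OF assms(1)] exhaust_2[of i] by (auto intro: sigma_eqI)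
  then show "L (munit i j) = (sigma P \<circ> T) (munit i j)" for i j
    using assms(5-8) exhaust_2[of i] exhaust_2[of j] by auto
qed (rule assms(3))

lemma munit_image_relations:
  assumes "surj L"
  defines "e \<equiv> L (munit 1 1)" and "x \<equiv> L (munit 1 2)" and "y \<equiv> L (munit 2 1)"
  shows "e ** e = e" "x ** x = 0" "y ** y = 0"
    and "e ** x + x ** e = x" "e ** y + y ** e = y" "x ** y + y ** x = mat 1"
proof -
  show "e ** e = e" "x ** x = 0" "y ** y = 0"
    using square[of "munit 1 1"] square[of "munit 1 2"] square[of "munit 2 1"] munit_relations(1-3)
    by (simp_all add: e_def x_def y_def complex_linear_0[OF complex_linear])
  show "e ** x + x ** e = x" "e ** y + y ** e = y" "x ** y + y ** x = mat 1"
    using anticommutator[of "munit 1 1" "munit 1 2"] anticommutator[of "munit 1 1" "munit 2 1"]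
      anticommutator[of "munit 1 2" "munit 2 1"] munit_relations(4-6) mat_1[OF assms(1)]
    by (simp_all add: e_def x_def y_def)
qed

lemma classification:
  assumes "bij L"
  shows "\<exists>P. invertible P \<and> (L = sigma P \<or> L = sigma P \<circ> transp_map)"
proof -
  define e x y where "e = L (munit 1 1)" and "x = L (munit 1 2)" and "y = L (munit 2 1)"
  have "surj L" "inj L"
    using assms bij_is_surj bij_is_inj by blast+
  note relations = munit_image_relations[OF \<open>surj L\<close>, folded e_def x_def y_def]
  note ee = relations(1) and xx = relations(2) and yy = relations(3)
    and ex = relations(4) and ey = relations(5) and xy = relations(6)
  have "munit 1 1 \<noteq> 0"
    by (simp add: munit_def vec_eq_iff)
  then have "e \<noteq> 0"
    using complex_linear_0[OF complex_linear] injD[OF \<open>inj L\<close>, of "munit 1 1" 0]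
    by (auto simp: e_def)
  then obtain p where p: "p \<noteq> 0" "e *v p = p"
    using idempotent_fixed_vector ee by blast
  from matrix_units_fixed_vector_disj[OF ee xx yy ex ey xy \<open>e \<noteq> 0\<close> p] show ?thesis
  proof
    assume "x *v p = 0"
    then obtain P where P: "invertible P" "P ** munit 1 1 = e ** P" "P ** munit 1 2 = x ** P"
      "P ** munit 2 1 = y ** P"
      using matrix_units_conjugator[OF ee yy ey xy p] by blast
    have "L = sigma P \<circ> id"
      using P by (intro eq_sigma_comp_if_munit[OF \<open>surj L\<close> P(1) complex_linear_id])
        (simp_all add: sigma_eqI e_def x_def y_def)
    then show ?thesis
      using P(1) by auto
  next
    assume "y *v p = 0"
    moreover have "y ** x + x ** y = mat 1"
      using xy by (simp add: add.commute)
    ultimately obtain P where P: "invertible P" "P ** munit 1 1 = e ** P"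
      "P ** munit 1 2 = y ** P" "P ** munit 2 1 = x ** P"
      using matrix_units_conjugator[OF ee xx ex _ p] by blast
    have "L = sigma P \<circ> transp_map"
      using P by (intro eq_sigma_comp_if_munit[OF \<open>surj L\<close> P(1) complex_linear_transp_map])
        (simp_all add: transp_map_munit sigma_eqI e_def x_def y_def)
    then show ?thesis
      using P(1) by auto
  qed
qed

end

subsection \<open>Matrices whose eigenvalues have distinct moduli\<close>

lemma trace_2: "trace (A::'a::semiring_1^2^2) = A$1$1 + A$2$2"
  by (simp add: trace_def sum_2)

text \<open>For the eigenvalues \<open>\<lambda>, \<mu>\<close> of \<open>N\<close> the quotient \<open>trace N ^ 2 / det N\<close> is
  \<open>\<lambda>/\<mu> + \<mu>/\<lambda> + 2\<close>, which lies in \<open>[0, 4]\<close> exactly when \<open>\<bar>\<lambda>\<bar> = \<bar>\<mu>\<bar>\<close>.\<close>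

definition distinct_eigenmoduli :: "mat2 \<Rightarrow> bool" where
  "distinct_eigenmoduli N \<longleftrightarrow> det N \<noteq> 0 \<and> trace N ^ 2 / det N \<notin> complex_of_real ` {0..4}"

lemma distinct_eigenmoduli_square:
  assumes "distinct_eigenmoduli N"
  shows "distinct_eigenmoduli (N ** N)"
proof -
  define q where "q = trace N ^ 2 / det N"
  have "det N \<noteq> 0" and q: "q \<notin> complex_of_real ` {0..4}"
    using assms unfolding distinct_eigenmoduli_def q_def by auto
  moreover have tr: "trace (N ** N) = trace N ^ 2 - 2 * det N"
    by (simp add: trace_2 det_2 mat2_simps power2_eq_square algebra_simps)
  ultimately have "trace (N ** N) ^ 2 / det (N ** N) = (q - 2) ^ 2"
    unfolding q_def det_mul tr by (simp add: field_simps power2_eq_square)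
  moreover have "(q - 2) ^ 2 \<notin> complex_of_real ` {0..4}"
  proof
    assume "(q - 2) ^ 2 \<in> complex_of_real ` {0..4}"
    then obtain x where x: "(q - 2) ^ 2 = complex_of_real x" "0 \<le> x" "x \<le> 4"
      by auto
    define r where "r = sqrt x"
    have r: "(q - 2) ^ 2 = complex_of_real (r ^ 2)" "0 \<le> r" "r \<le> 2"
      using x real_sqrt_le_mono[OF x(3)] by (simp_all add: r_def)
    then have "q = complex_of_real (2 + r) \<or> q = complex_of_real (2 - r)"
      by (auto simp: power2_eq_iff algebra_simps)
    moreover have "2 + r \<in> {0..4}" "2 - r \<in> {0..4}"
      using r(2,3) by auto
    ultimately have "q \<in> complex_of_real ` {0..4}"
      by blast
    with q show False ..
  qed
  ultimately show ?thesis
    using \<open>det N \<noteq> 0\<close> unfolding distinct_eigenmoduli_def by (simp add: det_mul)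
qed

lemma anticommutant_distinct_eigenmoduli:
  assumes "distinct_eigenmoduli N" "N ** C + C ** N = 0"
  shows "C = 0"
proof -
  have "det N \<noteq> 0" "trace N \<noteq> 0"
    using assms(1) unfolding distinct_eigenmoduli_def by (auto simp: image_iff)
  have "N ** N = cscale (trace N) N - cscale (det N) (mat 1)"
    by (simp add: trace_2 det_2 mat2_simps algebra_simps)
  then have "cscale (trace N) (N ** C - C ** N) = N ** N ** C - C ** (N ** N)"
    by (simp add: matrix_mult_diff_distrib cscale_matrix_mult cscale_diff_right)
  also have "\<dots> = N ** (N ** C + C ** N) - (N ** C + C ** N) ** N"
    by (simp add: matrix_add_ldistrib matrix_add_rdistrib matrix_mul_assoc)
  finally have "N ** C = C ** N"
    using assms(2) \<open>trace N \<noteq> 0\<close> by (simp add: cscale_eq_0_iff)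
  then have "N ** C + N ** C = 0"
    using assms(2) by simp
  then have "matrix_inv N ** (N ** C) = 0"
    using mat2_double_eq_0 by (metis times0_right)
  then show ?thesis
    using \<open>det N \<noteq> 0\<close> by (simp add: matrix_mul_assoc matrix_inv_left invertible_det_nz)
qed

lemma distinct_eigenmoduli_exists: "\<exists>N. distinct_eigenmoduli N"
proof
  define N :: mat2 where "N = mat 1 + munit 2 2"
  have "det N = 2" "trace N = 3"
    by (simp_all add: N_def det_2 trace_2 mat_def munit_def)
  moreover have "(9 / 2 :: complex) \<notin> complex_of_real ` {0..4}"
  proof
    assume "(9 / 2 :: complex) \<in> complex_of_real ` {0..4}"
    then obtain r :: real where r: "9 / 2 = complex_of_real r" "r \<in> {0..4}"
      by (rule imageE)
    then have "complex_of_real r = complex_of_real (9 / 2)"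
      by simp
    then have "r = 9 / 2"
      by (simp only: of_real_eq_iff)
    with r(2) show False
      by simp
  qed
  ultimately show "distinct_eigenmoduli N"
    by (simp add: distinct_eigenmoduli_def power2_eq_square)
qed

lemma open_distinct_eigenmoduli: "open {N. distinct_eigenmoduli N}"
proof -
  have det: "continuous_on UNIV (det :: mat2 \<Rightarrow> complex)"
    unfolding det_2 by (intro continuous_intros)
  have "continuous_on UNIV (trace :: mat2 \<Rightarrow> complex)"
    unfolding trace_2 by (intro continuous_intros)
  then have "continuous_on {N. det N \<noteq> 0} (\<lambda>N::mat2. trace N ^ 2 / det N)"
    using det by (auto intro!: continuous_intros intro: continuous_on_subset)
  moreover have "open {N::mat2. det N \<noteq> 0}"
    by (rule open_Collect_neq[OF det continuous_on_const])
  moreover have "open (- (complex_of_real ` {0..4}))"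
    by (intro open_Compl compact_imp_closed compact_continuous_image continuous_intros compact_Icc)
  ultimately have "open ({N::mat2. det N \<noteq> 0} \<inter> (\<lambda>N. trace N ^ 2 / det N) -` (- (complex_of_real ` {0..4})))"
    by (rule continuous_open_preimage)
  moreover have "{N. distinct_eigenmoduli N} =
      {N::mat2. det N \<noteq> 0} \<inter> (\<lambda>N. trace N ^ 2 / det N) -` (- (complex_of_real ` {0..4}))"
    by (auto simp: distinct_eigenmoduli_def)
  ultimately show ?thesis
    by simp
qed

subsection \<open>Taylor coefficients along complex lines\<close>

lemma fps_compose_X_power_nth:
  fixes F :: "'a::comm_ring_1 fps"
  assumes "k > 0"
  shows "fps_nth (F oo fps_X ^ k) n = (if k dvd n then fps_nth F (n div k) else 0)"
proof -
  have "fps_nth (F oo fps_X ^ k) n = (\<Sum>i\<in>{0..n}. fps_nth F i * (if n = k * i then 1 else 0))"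
    by (simp add: fps_compose_nth power_mult[symmetric])
  also have "\<dots> = (\<Sum>i\<in>{0..n}. if i = n div k \<and> k dvd n then fps_nth F i else 0)"
    using assms by (intro sum.cong) auto
  also have "\<dots> = (if k dvd n then fps_nth F (n div k) else 0)"
    using assms by (auto simp: sum.delta' div_le_dividend)
  finally show ?thesis .
qed

lemma bounded_linear_cscale_left: "bounded_linear (\<lambda>s. cscale s D)"
proof -
  have "linear (\<lambda>s. cscale s D)"
    by (rule linearI) (simp_all add: scaleR_eq_cscale mat2_simps algebra_simps scaleR_conv_of_real)
  then show ?thesis
    using linear_conv_bounded_linear by blast
qed

lemma has_derivative_line: "((\<lambda>t. A + cscale t D) has_derivative (\<lambda>s. cscale s D)) (at t)"
  using has_derivative_add[OF has_derivative_const
      bounded_linear_imp_has_derivative[OF bounded_linear_cscale_left]]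
  by simp

lemma has_field_derivative_line_entry:
  assumes "(h has_derivative L) (at (A + cscale t D))" "complex_linear L"
  shows "((\<lambda>t. h (A + cscale t D) $ i $ j) has_field_derivative L D $ i $ j) (at t)"
proof -
  have "((\<lambda>t. h (A + cscale t D) $ i $ j) has_derivative (\<lambda>s. L (cscale s D) $ i $ j)) (at t)"
    using has_derivative_compose[OF has_derivative_line assms(1)]
    by (intro bounded_linear.has_derivative[where f = "\<lambda>X. X $ i $ j"]
        bounded_linear_compose[OF bounded_linear_vec_nth bounded_linear_vec_nth])
  moreover have "(\<lambda>s. L (cscale s D) $ i $ j) = (\<lambda>s. L D $ i $ j * s)"
    using complex_linear_cscale[OF assms(2)] by (simp add: fun_eq_iff cscale_def mult.commute)
  ultimately show ?thesis
    by (simp add: has_field_derivative_def)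
qed

lemma holomorphic_on_line_entry:
  assumes "holo_mat h"
  shows "(\<lambda>t. h (A + cscale t D) $ i $ j) holomorphic_on UNIV"
proof -
  have "(\<lambda>t. h (A + cscale t D) $ i $ j) field_differentiable (at t)" for t
    using assms has_field_derivative_line_entry field_differentiable_def
    unfolding holo_mat_def by blast
  then show ?thesis
    by (simp add: holomorphic_on_def field_differentiable_at_within)
qed

lemma holo_mat_eq_on_line:
  assumes "holo_mat g" "holo_mat h" "open S" "S \<noteq> {}"
    and "\<And>s. s \<in> S \<Longrightarrow> g (A + cscale s D) = h (A + cscale s D)"
  shows "g (A + cscale t D) = h (A + cscale t D)"
proof -
  have "g (A + cscale t D) $ i $ j = h (A + cscale t D) $ i $ j" for i j
    by (rule analytic_continuation_open[OF assms(3) open_UNIV assms(4) connected_UNIV subset_UNIV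
          holomorphic_on_line_entry[OF assms(1)] holomorphic_on_line_entry[OF assms(2)]])
      (simp_all add: assms(5))
  then show ?thesis
    by (simp add: vec_eq_iff)
qed

definition line_fps :: "(mat2 \<Rightarrow> mat2) \<Rightarrow> mat2 \<Rightarrow> 2 \<Rightarrow> 2 \<Rightarrow> complex fps" where
  "line_fps g M i j = fps_expansion (\<lambda>t. g (cscale t M) $ i $ j) 0"

definition line_coeff :: "(mat2 \<Rightarrow> mat2) \<Rightarrow> nat \<Rightarrow> mat2 \<Rightarrow> mat2" where
  "line_coeff g n M = (\<chi> i j. fps_nth (line_fps g M i j) n)"

lemma has_fps_expansion_line_fps:
  assumes "holo_mat g"
  shows "(\<lambda>t. g (cscale t M) $ i $ j) has_fps_expansion line_fps g M i j"
  unfolding line_fps_def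
  using holomorphic_on_line_entry[OF assms, of 0 M i j] by (intro has_fps_expansion_fps_expansion) auto

lemma line_coeff_0:
  assumes "holo_mat g"
  shows "line_coeff g 0 M = g 0"
  using has_fps_expansion_imp_0_eq_fps_nth_0[OF has_fps_expansion_line_fps[OF assms]]
  by (simp add: line_coeff_def vec_eq_iff)

lemma line_coeff_1:
  assumes "holo_mat g" "(g has_derivative L) (at 0)" "complex_linear L"
  shows "line_coeff g 1 M = L M"
proof -
  have "((\<lambda>t. g (0 + cscale t M) $ i $ j) has_field_derivative L M $ i $ j) (at 0)" for i j
    using assms(2,3) by (intro has_field_derivative_line_entry) simp_all
  then have "deriv (\<lambda>t. g (cscale t M) $ i $ j) 0 = L M $ i $ j" for i j
    using DERIV_imp_deriv by fastforce
  then show ?thesis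
    using fps_nth_fps_expansion[OF has_fps_expansion_line_fps[OF assms(1)], of M _ _ 1]
    by (simp add: line_coeff_def vec_eq_iff)
qed

lemma eq_line_coeff_1:
  assumes "holo_mat g" "\<And>n. n \<noteq> 1 \<Longrightarrow> line_coeff g n M = 0"
  shows "g M = line_coeff g 1 M"
proof -
  have "g M $ i $ j = line_coeff g 1 M $ i $ j" for i j
  proof -
    define a where "a = line_coeff g 1 M $ i $ j"
    have "fps_nth (line_fps g M i j) n = fps_nth (fps_const a * fps_X) n" for n
      using assms(2)[of n] by (cases "n = 1") (simp_all add: a_def line_coeff_def vec_eq_iff)
    then have "line_fps g M i j = fps_const a * fps_X"
      by (simp add: fps_eq_iff)
    then have "(\<lambda>t. g (cscale t M) $ i $ j - a * t) has_fps_expansion 0"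
      using has_fps_expansion_diff[OF has_fps_expansion_line_fps[OF assms(1), of M i j]
          has_fps_expansion_cmult_left[OF has_fps_expansion_fps_X, of a]] by simp
    moreover have "(\<lambda>t. g (cscale t M) $ i $ j - a * t) holomorphic_on UNIV"
      using holomorphic_on_line_entry[OF assms(1), of 0 M i j] by (auto intro!: holomorphic_intros)
    ultimately have "g (cscale 1 M) $ i $ j - a * 1 = 0"
      by (rule has_fps_expansion_0_analytic_continuation) auto
    then show ?thesis
      by (simp add: a_def)
  qed
  then show ?thesis
    by (simp add: vec_eq_iff)
qed

lemma line_fps_square:
  assumes "holo_mat g" "\<And>M. g (M ** M) = g M ** g M"
  shows "line_fps g (M ** M) i j oo fps_X ^ 2 = (\<Sum>k\<in>UNIV. line_fps g M i k * line_fps g M k j)"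
proof (rule fps_expansion_unique_complex)
  note expansion = has_fps_expansion_line_fps[OF assms(1)]
  have "cscale (t ^ 2) (M ** M) = cscale t M ** cscale t M" for t
    by (simp add: mat2_simps power2_eq_square algebra_simps)
  then have "g (cscale (t ^ 2) (M ** M)) = g (cscale t M) ** g (cscale t M)" for t
    using assms(2) by simp
  then have "(\<lambda>t. g (cscale t (M ** M)) $ i $ j) \<circ> (\<lambda>t. t ^ 2)
      = (\<lambda>t. \<Sum>k\<in>UNIV. g (cscale t M) $ i $ k * g (cscale t M) $ k $ j)"
    by (simp add: fun_eq_iff matrix_matrix_mult_def)
  then show "(\<lambda>t. \<Sum>k\<in>UNIV. g (cscale t M) $ i $ k * g (cscale t M) $ k $ j)
      has_fps_expansion (line_fps g (M ** M) i j oo fps_X ^ 2)"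
    using has_fps_expansion_compose[OF expansion[of "M ** M" i j]
        has_fps_expansion_fps_X_power[of 2]] by simp
  show "(\<lambda>t. \<Sum>k\<in>UNIV. g (cscale t M) $ i $ k * g (cscale t M) $ k $ j)
      has_fps_expansion (\<Sum>k\<in>UNIV. line_fps g M i k * line_fps g M k j)"
    by (intro has_fps_expansion_sum has_fps_expansion_mult expansion)
qed

lemma line_coeff_square:
  assumes "holo_mat g" "\<And>M. g (M ** M) = g M ** g M"
  shows "(if even n then line_coeff g (n div 2) (M ** M) else 0)
    = (\<Sum>l\<in>{0..n}. line_coeff g l M ** line_coeff g (n - l) M)"
proof -
  have "(if even n then line_coeff g (n div 2) (M ** M) $ i $ j else 0)
      = (\<Sum>l\<in>{0..n}. \<Sum>k\<in>UNIV. line_coeff g l M $ i $ k * line_coeff g (n - l) M $ k $ j)"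
    for i j
  proof -
    have "line_fps g (M ** M) i j oo fps_X ^ 2 = (\<Sum>k\<in>UNIV. line_fps g M i k * line_fps g M k j)"
      using assms by (rule line_fps_square)
    from arg_cong[OF this, of "\<lambda>F. fps_nth F n"]
    have "(if even n then line_coeff g (n div 2) (M ** M) $ i $ j else 0)
        = (\<Sum>k\<in>UNIV. \<Sum>l\<in>{0..n}. line_coeff g l M $ i $ k * line_coeff g (n - l) M $ k $ j)"
      by (simp add: line_coeff_def fps_compose_X_power_nth fps_sum_nth fps_mult_nth split: if_splits)
    also have "\<dots> = (\<Sum>l\<in>{0..n}. \<Sum>k\<in>UNIV. line_coeff g l M $ i $ k * line_coeff g (n - l) M $ k $ j)"
      by (rule sum.swap)
    finally show ?thesis .
  qed
  moreover have "(A ** B) $ i $ j = (\<Sum>k\<in>UNIV. A $ i $ k * B $ k $ j)" for A B :: mat2 and i j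
    by (simp add: matrix_matrix_mult_def)
  ultimately show ?thesis
    by (cases "even n") (simp_all add: vec_eq_iff sum_component)
qed

subsection \<open>Holomorphic maps commuting with squaring\<close>

locale holo_square_map =
  fixes g L :: "mat2 \<Rightarrow> mat2"
  assumes holo: "holo_mat g"
    and square: "g (M ** M) = g M ** g M"
    and has_derivative_0: "(g has_derivative L) (at 0)"
    and complex_linear: "complex_linear L"
    and surj: "surj L"
begin

lemma coeff_square:
  "(if even n then line_coeff g (n div 2) (M ** M) else 0)
    = (\<Sum>l\<in>{0..n}. line_coeff g l M ** line_coeff g (n - l) M)"
  using holo square by (rule line_coeff_square)

lemma coeff_1: "line_coeff g 1 M = L M"
  using holo has_derivative_0 complex_linear by (rule line_coeff_1)

lemma map_0: "g 0 = 0"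
proof -
  obtain M where "mat 1 = L M"
    using surjD[OF surj] by blast
  then have M: "L M = mat 1" ..
  have "0 = (\<Sum>l\<in>{0..1}. line_coeff g l M ** line_coeff g (1 - l) M)"
    using coeff_square[of 1 M] by simp
  also have "\<dots> = g 0 + g 0"
    using line_coeff_0[OF holo] coeff_1[simplified] M by (simp add: atLeast0_atMost_Suc)
  finally show ?thesis
    using mat2_double_eq_0 by simp
qed

lemma coeff_0: "line_coeff g 0 M = 0"
  by (simp add: line_coeff_0[OF holo] map_0)

lemma L_square: "L (M ** M) = L M ** L M"
  using coeff_square[of 2 M]
  by (simp add: coeff_0 coeff_1[simplified] atLeast0_atMost_Suc numeral_2_eq_2)

text \<open>The recursion for the coefficient of \<open>t ^ (n + 1)\<close> isolates
  \<open>L M ** line_coeff g n M + line_coeff g n M ** L M\<close>; every other term involves a coefficient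
  of lower order \<open>\<ge> 2\<close>, possibly at \<open>M ** M\<close>, whose image under \<open>L\<close> again has
  distinct eigenmoduli.\<close>

lemma coeff_vanish:
  assumes "distinct_eigenmoduli (L M)" "2 \<le> n"
  shows "line_coeff g n M = 0"
  using assms
proof (induction n arbitrary: M rule: less_induct)
  case (less n)
  have IH: "line_coeff g l M' = 0" if "2 \<le> l" "l < n" "distinct_eigenmoduli (L M')" for l M'
    using less.IH that by blast
  have lhs: "(if even (Suc n) then line_coeff g (Suc n div 2) (M ** M) else 0) = 0"
  proof (cases "even (Suc n)")
    case True
    then have "2 \<le> Suc n div 2" "Suc n div 2 < n"
      using less.prems(2) by presburger+
    moreover have "distinct_eigenmoduli (L (M ** M))"
      using distinct_eigenmoduli_square[OF less.prems(1)] by (simp add: L_square)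
    ultimately show ?thesis
      using IH True by simp
  qed simp
  have terms: "line_coeff g l M ** line_coeff g (Suc n - l) M
      = (if l = 1 then L M ** line_coeff g n M else 0)
        + (if l = n then line_coeff g n M ** L M else 0)" if "l \<le> Suc n" for l
  proof -
    consider "l = 0" | "l = 1" | "l = n" | "l = Suc n" | "2 \<le> l" "l < n"
      using \<open>l \<le> Suc n\<close> by linarith
    then show ?thesis
      using less.prems(2) by cases (auto simp: coeff_0 coeff_1[simplified] IH[OF _ _ less.prems(1)])
  qed
  have "0 = (\<Sum>l\<in>{0..Suc n}. line_coeff g l M ** line_coeff g (Suc n - l) M)"
    using coeff_square[of "Suc n" M] lhs by simp
  also have "\<dots> = (\<Sum>l\<in>{0..Suc n}. (if l = 1 then L M ** line_coeff g n M else 0)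
      + (if l = n then line_coeff g n M ** L M else 0))"
    using terms by (intro sum.cong) simp_all
  also have "\<dots> = L M ** line_coeff g n M + line_coeff g n M ** L M"
    using less.prems(2) by (simp add: sum.distrib)
  finally show ?case
    by (rule anticommutant_distinct_eigenmoduli[OF less.prems(1) sym])
qed

lemma eq_on_distinct_eigenmoduli:
  assumes "distinct_eigenmoduli (L M)"
  shows "g M = L M"
proof -
  have "line_coeff g n M = 0" if "n \<noteq> 1" for n
    using that coeff_0 coeff_vanish[OF assms] by (cases "n = 0") auto
  then have "g M = line_coeff g 1 M"
    by (rule eq_line_coeff_1[OF holo])
  then show ?thesis
    by (simp only: coeff_1)
qed

lemma eq_derivative: "g = L"
proof
  fix M
  obtain D where "distinct_eigenmoduli D"
    using distinct_eigenmoduli_exists by blast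
  moreover obtain N where "D = L N"
    using surjD[OF surj] by blast
  ultimately have N: "distinct_eigenmoduli (L N)"
    by simp
  define W where "W = N - M"
  define S where "S = {t. distinct_eigenmoduli (L (M + cscale t W))}"
  have line: "L (M + cscale t W) = L M + cscale t (L W)" for t
    by (simp add: complex_linear_add[OF complex_linear] complex_linear_cscale[OF complex_linear])
  have "continuous_on UNIV (\<lambda>t. L M + cscale t (L W))"
    by (intro continuous_intros linear_continuous_on bounded_linear_cscale_left)
  then have "\<forall>B. open B \<longrightarrow> open ((\<lambda>t. L M + cscale t (L W)) -` B \<inter> UNIV)"
    by (rule continuous_on_open_vimage[OF open_UNIV, THEN iffD1])
  from this[rule_format, OF open_distinct_eigenmoduli] have "open S"
    by (simp add: S_def line vimage_def)
  moreover have "S \<noteq> {}"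
    using N by (auto simp: S_def W_def intro: exI[of _ 1])
  moreover have "g (M + cscale t W) = L (M + cscale t W)" if "t \<in> S" for t
    using that eq_on_distinct_eigenmoduli by (simp add: S_def)
  ultimately have "g (M + cscale 0 W) = L (M + cscale 0 W)"
    by (rule holo_mat_eq_on_line[OF holo complex_linear_imp_holo_mat[OF complex_linear]])
  then show "g M = L M"
    by simp
qed

end

lemma surj_derivative_of_bij:
  fixes g :: "'a::real_normed_vector \<Rightarrow> 'a"
  assumes "bij g" "(g has_derivative L) (at (inv g y))" "(inv g has_derivative L') (at y)"
  shows "surj L"
proof -
  have "((\<lambda>x. g (inv g x)) has_derivative (\<lambda>x. L (L' x))) (at y)"
    using has_derivative_compose[OF assms(3,2)] .
  moreover have "(\<lambda>x. g (inv g x)) = (\<lambda>x. x)"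
    using assms(1) by (simp add: fun_eq_iff bij_def surj_f_inv_f)
  ultimately have "(\<lambda>x. L (L' x)) = (\<lambda>x. x)"
    using has_derivative_ident has_derivative_unique by metis
  then show ?thesis
    by (metis surjI)
qed

lemma Aut_Phi_cases:
  assumes "g \<in> Aut_Phi"
  obtains P where "invertible P" "g = sigma P \<or> g = sigma P \<circ> transp_map"
proof -
  have "bij g" "holo_mat g" "holo_mat (inv g)" and square: "g (M ** M) = g M ** g M" for M
    using assms unfolding Aut_Phi_def holo_aut_def Phi_Id_def by (auto simp: fun_eq_iff)
  obtain L where L: "complex_linear L" "(g has_derivative L) (at 0)"
    using \<open>holo_mat g\<close> unfolding holo_mat_def by blast
  obtain L' where "(inv g has_derivative L') (at (g 0))"
    using \<open>holo_mat (inv g)\<close> unfolding holo_mat_def by blast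
  moreover have "inv g (g 0) = 0"
    using \<open>bij g\<close> by (simp add: bij_is_inj)
  ultimately have "surj L"
    using surj_derivative_of_bij[OF \<open>bij g\<close>] L(2) by metis
  interpret holo_square_map g L
    using \<open>holo_mat g\<close> square L \<open>surj L\<close> by unfold_locales
  interpret mat2_jordan_hom g
    using L(1) square by (unfold_locales) (simp_all add: eq_derivative)
  show ?thesis
    using classification[OF \<open>bij g\<close>] that by blast
qed

theorem proposition3p9:
  shows "Aut_Phi = {sigma P | P. invertible P} \<union> {sigma P \<circ> transp_map | P. invertible P}
    \<and> (\<forall>P. invertible P \<longrightarrow> (sigma P = id \<longleftrightarrow> (\<exists>c. c \<noteq> 0 \<and> P = cscale c (mat 1))))
    \<and> (\<forall>P. invertible P \<longrightarrow> transp_map \<noteq> sigma P)"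
proof -
  have "Aut_Phi \<subseteq> {sigma P | P. invertible P} \<union> {sigma P \<circ> transp_map | P. invertible P}"
    by (blast elim: Aut_Phi_cases)
  moreover have "{sigma P | P. invertible P} \<union> {sigma P \<circ> transp_map | P. invertible P} \<subseteq> Aut_Phi"
    using sigma_in_Aut_Phi sigma_transp_in_Aut_Phi by blast
  ultimately show ?thesis
    using sigma_eq_id_iff transp_map_neq_sigma by blast
qed

end
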